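(* Realize $\mathfrak{h}_3$ as the strictly upper triangular real $3\times3$ matrices, and write $M(x,y,z)$ for the matrix with entries $x$ at position $(1,2)$, $y$ at $(2,3)$, $z$ at $(1,3)$. For every $a\in\mathbb{R}$ and every continuous sublinear function $c:\mathbb{R}\to\mathbb{R}$, the function defined for $x\ne0$ by \[\zeta(M(x,y,z))=c(y/x)\cdot x+a\cdot y\] extends continuously to an $\mathrm{Ad}$-invariant Lie quasi-state on $\mathfrak{h}_3$ (with $\zeta(M(0,y,z))=a y$). Conversely, every continuous $\mathrm{Ad}$-invariant Lie quasi-state on $\mathfrak{h}_3$ is of this form.
   Context: A Lie quasi-state is $\zeta:\mathfrak{g}\to\mathbb{R}$ with $\zeta(aX+bY)=a\zeta(X)+b\zeta(Y)$ for all $a,b\in\mathbb{R}$ and commuting $X,Y$. $\mathrm{Ad}$-invariant means invariant under the adjoint group. A function $c:\mathbb{R}\to\mathbb{R}$ is sublinear if $c(s)/|s|\to0$ as $|s|\to\infty$. *)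

theory Defs
  imports "HOL-Analysis.Analysis" "HOL-Library.Numeral_Type"
begin

text \<open>Rows/columns are indexed by the elements 1, 2, 3 of the three-element type 3
  (note 3 = 0 in this type; the three labels are distinct).\<close>

definition Mh :: "real \<Rightarrow> real \<Rightarrow> real \<Rightarrow> real^3^3" where
  "Mh x y z = (\<chi> i j. if i = 1 \<and> j = 2 then x
                       else if i = 2 \<and> j = 3 then y
                       else if i = 1 \<and> j = 3 then z else 0)"

definition h3 :: "(real^3^3) set" where
  "h3 = {Mh x y z | x y z. True}"

text \<open>The Heisenberg group (unipotent upper triangular matrices); its conjugation
  action on h3 is the adjoint group of h3.\<close>
definition H3 :: "(real^3^3) set" where
  "H3 = {mat 1 + Mh p q r | p q r. True}"

definition Ad :: "real^3^3 \<Rightarrow> real^3^3 \<Rightarrow> real^3^3" where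
  "Ad g X = g ** X ** matrix_inv g"

definition lie_quasi_state_h3 :: "(real^3^3 \<Rightarrow> real) \<Rightarrow> bool" where
  "lie_quasi_state_h3 \<zeta> \<longleftrightarrow>
     (\<forall>X\<in>h3. \<forall>Y\<in>h3. X ** Y = Y ** X \<longrightarrow>
        (\<forall>a b::real. \<zeta> (a *\<^sub>R X + b *\<^sub>R Y) = a * \<zeta> X + b * \<zeta> Y))"

definition Ad_invariant_h3 :: "(real^3^3 \<Rightarrow> real) \<Rightarrow> bool" where
  "Ad_invariant_h3 \<zeta> \<longleftrightarrow> (\<forall>g\<in>H3. \<forall>X\<in>h3. \<zeta> (Ad g X) = \<zeta> X)"

definition sublinear :: "(real \<Rightarrow> real) \<Rightarrow> bool" where
  "sublinear c \<longleftrightarrow> ((\<lambda>s. c s / \<bar>s\<bar>) \<longlongrightarrow> 0) at_infinity"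

end

theory Submission
  imports Defs
begin

(*
  Two elements M(x,y,z), M(x',y',z') of h3 commute iff
  x y' = x' y, and the adjoint action of the Heisenberg group is the shear
  M(x,y,z) \<mapsto> M(x, y, z + p y - x q).  The whole classification is read off these
  two formulas.

  Forward direction: given a sublinear continuous c, the perspective function
  (u,v) \<mapsto> u c(v/u) (set to 0 on u = 0) is continuous on the plane, because the
  sublinearity bound |c t| \<le> e|t| + C forces it to vanish in the limit u \<rightarrow> 0; it is
  additive on proportional pairs, since those lie on a common line through the origin.

  Converse: a quasi-state is homogeneous; Ad-invariance makes it independent of z
  off the centre, and additivity against M(1,0,0) kills it on the centre.  Thus
  \<zeta>(M(x,y,z)) = x \<zeta>(M(1,y/x,0)) for x \<noteq> 0 and \<zeta>(M(0,y,z)) = a y with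
  a = \<zeta>(M(0,1,0)); putting c(t) = \<zeta>(M(1,t,0)) - a t, sublinearity of c is exactly
  continuity of \<zeta> at M(0,1,0) along M(1/s,1,0), s \<rightarrow> \<infinity>.
*)

section \<open>Coordinates on h3 and the adjoint action\<close>

lemma Mh_nth:
  "Mh x y z $ i $ j = (if i = 1 \<and> j = 2 then x else if i = 2 \<and> j = 3 then y
                      else if i = 1 \<and> j = 3 then z else 0)"
  by (simp add: Mh_def)

lemma Mh_eq_iff: "Mh x y z = Mh x' y' z' \<longleftrightarrow> x = x' \<and> y = y' \<and> z = z'"
  by (auto simp: vec_eq_iff Mh_nth forall_3)

lemma Mh_lincomb:
  "a *\<^sub>R Mh x y z + b *\<^sub>R Mh x' y' z' = Mh (a*x + b*x') (a*y + b*y') (a*z + b*z')"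
  by (simp add: vec_eq_iff Mh_nth forall_3)

lemma tendsto_Mh:
  assumes "(f \<longlongrightarrow> x) F" "(g \<longlongrightarrow> y) F" "(h \<longlongrightarrow> z) F"
  shows "((\<lambda>s. Mh (f s) (g s) (h s)) \<longlongrightarrow> Mh x y z) F"
proof -
  have basis: "Mh u v w = u *\<^sub>R Mh 1 0 0 + v *\<^sub>R Mh 0 1 0 + w *\<^sub>R Mh 0 0 1" for u v w
    by (simp add: vec_eq_iff Mh_nth forall_3)
  show ?thesis
    by (subst (1 2) basis) (intro tendsto_intros assms)
qed

lemma Mh_mult: "Mh x y z ** Mh x' y' z' = Mh 0 0 (x*y')"
  by (simp add: vec_eq_iff Mh_nth forall_3 matrix_matrix_mult_def sum_3)

lemma Mh_commute_iff: "Mh x y z ** Mh x' y' z' = Mh x' y' z' ** Mh x y z \<longleftrightarrow> x*y' = x'*y"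
  by (simp add: Mh_mult Mh_eq_iff mult.commute)

lemma Mh_in_h3: "Mh x y z \<in> h3"
  by (auto simp: h3_def)

lemma h3E:
  assumes "X \<in> h3" obtains x y z where "X = Mh x y z"
  using assms by (auto simp: h3_def)

lemma unipotent_mult:
  "(mat 1 + Mh p q r) ** (mat 1 + Mh p' q' r') = mat 1 + Mh (p+p') (q+q') (r+r'+p*q')"
  by (simp add: vec_eq_iff Mh_nth forall_3 matrix_matrix_mult_def sum_3 mat_def)

lemma unipotent_mult_left: "(mat 1 + Mh p q r) ** Mh x y z = Mh x y (z + p*y)"
  by (simp add: vec_eq_iff Mh_nth forall_3 matrix_matrix_mult_def sum_3 mat_def)

lemma unipotent_mult_right: "Mh x y z ** (mat 1 + Mh p q r) = Mh x y (z + x*q)"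
  by (simp add: vec_eq_iff Mh_nth forall_3 matrix_matrix_mult_def sum_3 mat_def)

lemma unipotent_inverse: "matrix_inv (mat 1 + Mh p q r) = mat 1 + Mh (-p) (-q) (p*q - r)"
  unfolding matrix_inv_def
proof (rule some_equality)
  let ?A = "mat 1 + Mh p q r" and ?B = "mat 1 + Mh (-p) (-q) (p*q - r)"
  have AB: "?A ** ?B = mat 1"
    by (simp add: unipotent_mult vec_eq_iff Mh_nth forall_3)
  then show "?A ** ?B = mat 1 \<and> ?B ** ?A = mat 1"
    by (simp add: unipotent_mult vec_eq_iff Mh_nth forall_3)
  fix A' assume inv: "?A ** A' = mat 1 \<and> A' ** ?A = mat 1"
  have "A' = A' ** (?A ** ?B)" using AB by (simp add: matrix_mul_rid)
  also have "\<dots> = (A' ** ?A) ** ?B" by (simp add: matrix_mul_assoc)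
  also have "\<dots> = ?B" using inv by (simp add: matrix_mul_lid)
  finally show "A' = ?B" .
qed

lemma Ad_Mh: "Ad (mat 1 + Mh p q r) (Mh x y z) = Mh x y (z + p*y - x*q)"
  by (simp add: Ad_def unipotent_inverse unipotent_mult_left unipotent_mult_right)

lemma unipotent_in_H3: "mat 1 + Mh p q r \<in> H3"
  by (auto simp: H3_def)

section \<open>The perspective of a sublinear function\<close>

definition perspective :: "(real \<Rightarrow> real) \<Rightarrow> real \<times> real \<Rightarrow> real" where
  "perspective c p = (if fst p = 0 then 0 else fst p * c (snd p / fst p))"

lemma perspective_Pair: "perspective c (u, v) = (if u = 0 then 0 else u * c (v / u))"
  by (simp add: perspective_def)

text \<open>A continuous sublinear function grows at most like e|t| + C, for every slope e > 0:
  beyond some radius the quotient c(t)/|t| is below e, and inside it c is bounded.\<close>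
lemma sublinear_affine_bound:
  assumes cc: "continuous_on UNIV c" and sl: "sublinear c" and e: "e > 0"
  obtains C where "C \<ge> 0" "\<And>t. \<bar>c t\<bar> \<le> e * \<bar>t\<bar> + C"
proof -
  have "eventually (\<lambda>s. \<bar>c s / \<bar>s\<bar>\<bar> < e) at_infinity"
    using sl e unfolding sublinear_def tendsto_iff by (simp add: dist_real_def)
  then obtain R where R: "\<And>s. R \<le> norm s \<Longrightarrow> \<bar>c s / \<bar>s\<bar>\<bar> < e"
    unfolding eventually_at_infinity by auto
  have "compact (c ` cball 0 \<bar>R\<bar>)"
    by (rule compact_continuous_image) (auto intro: continuous_on_subset[OF cc])
  then obtain B where B: "B \<ge> 0" "\<And>t. \<bar>t\<bar> \<le> \<bar>R\<bar> \<Longrightarrow> \<bar>c t\<bar> \<le> B"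
    by (metis compact_imp_bounded bounded_pos image_eqI less_imp_le mem_cball_0 real_norm_def)
  have "\<bar>c t\<bar> \<le> e * \<bar>t\<bar> + B" for t
  proof (cases "\<bar>t\<bar> \<le> \<bar>R\<bar>")
    case True
    then show ?thesis using B e by (smt (verit) mult_nonneg_nonneg abs_ge_zero)
  next
    case False
    then have "\<bar>c t / \<bar>t\<bar>\<bar> < e" "\<bar>t\<bar> > 0" using R by auto
    then have "\<bar>c t\<bar> < e * \<bar>t\<bar>" by (simp add: abs_div divide_less_eq)
    then show ?thesis using B by simp
  qed
  with B that show ?thesis by blast
qed

lemma perspective_bound:
  assumes "\<And>t. \<bar>c t\<bar> \<le> e * \<bar>t\<bar> + C" and "e \<ge> 0" "C \<ge> 0"
  shows "\<bar>perspective c (u, v)\<bar> \<le> e * \<bar>v\<bar> + C * \<bar>u\<bar>"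
proof (cases "u = 0")
  case True then show ?thesis using assms by (simp add: perspective_Pair)
next
  case False
  have "\<bar>perspective c (u, v)\<bar> = \<bar>u\<bar> * \<bar>c (v / u)\<bar>" using False by (simp add: perspective_Pair abs_mult)
  also have "\<dots> \<le> \<bar>u\<bar> * (e * \<bar>v / u\<bar> + C)" by (rule mult_left_mono[OF assms(1)]) simp
  also have "\<dots> = e * \<bar>v\<bar> + C * \<bar>u\<bar>" using False by (simp add: algebra_simps abs_div)
  finally show ?thesis .
qed

text \<open>Approaching the axis u = 0 the perspective tends to 0: near (0, v) the bound
  e|v| + C|u| can be made arbitrarily small by first choosing e and then u.\<close>
lemma perspective_tendsto_axis:
  assumes cc: "continuous_on UNIV c" and sl: "sublinear c"
  shows "(perspective c \<longlongrightarrow> 0) (at (0, v))"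
proof (rule tendstoI)
  fix \<epsilon> :: real assume \<epsilon>: "\<epsilon> > 0"
  define e where "e = \<epsilon> / (2 * (\<bar>v\<bar> + 1))"
  have e: "e > 0" using \<epsilon> by (simp add: e_def add_pos_nonneg)
  obtain C where C: "C \<ge> 0" "\<And>t. \<bar>c t\<bar> \<le> e * \<bar>t\<bar> + C"
    using sublinear_affine_bound[OF cc sl e] by blast
  have "((\<lambda>q. \<bar>snd q\<bar>) \<longlongrightarrow> \<bar>v\<bar>) (at (0, v))"
    by (intro tendsto_eq_intros) auto
  then have near_v: "eventually (\<lambda>q. \<bar>snd q\<bar> < \<bar>v\<bar> + 1) (at (0, v))"
    by (rule order_tendstoD(2)) simp
  have "((\<lambda>q. C * \<bar>fst q\<bar>) \<longlongrightarrow> 0) (at (0, v))"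
    by (auto intro!: tendsto_eq_intros)
  then have near_u: "eventually (\<lambda>q. C * \<bar>fst q\<bar> < \<epsilon> / 2) (at (0, v))"
    by (rule order_tendstoD(2)) (use \<epsilon> in simp)
  from near_v near_u
  show "eventually (\<lambda>q. dist (perspective c q) 0 < \<epsilon>) (at (0, v))"
  proof eventually_elim
    case (elim q)
    have "e * \<bar>snd q\<bar> \<le> e * (\<bar>v\<bar> + 1)" using elim(1) e by (intro mult_left_mono) auto
    also have "\<dots> = \<epsilon> / 2" by (simp add: e_def field_simps add_pos_nonneg)
    finally have "\<bar>perspective c q\<bar> < \<epsilon>"
      using perspective_bound[OF C(2), of "fst q" "snd q"] e C elim(2) by simp
    then show ?case by simp
  qed
qed

lemma isCont_perspective:
  assumes cc: "continuous_on UNIV c" and sl: "sublinear c"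
  shows "isCont (perspective c) p"
proof (cases "fst p = 0")
  case False
  have "open {q::real \<times> real. fst q \<noteq> 0}" by (intro open_Collect_neq continuous_intros)
  then have ev: "eventually (\<lambda>q. perspective c q = fst q * c (snd q / fst q)) (nhds p)"
    using False unfolding eventually_nhds perspective_def by (intro exI[of _ "{q. fst q \<noteq> 0}"]) auto
  have "isCont c (snd p / fst p)" using cc by (simp add: continuous_on_eq_continuous_at)
  moreover have "isCont (\<lambda>q. snd q / fst q) p" using False by (intro continuous_intros) auto
  ultimately have "isCont (\<lambda>q. c (snd q / fst q)) p" by (rule isCont_o2[rotated])
  then have "isCont (\<lambda>q. fst q * c (snd q / fst q)) p" by (intro continuous_intros)
  then show ?thesis using isCont_cong[OF ev] by simp
next
  case True
  then obtain v where "p = (0, v)" by (metis prod.collapse)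
  then show ?thesis
    using perspective_tendsto_axis[OF cc sl, of v] by (simp add: isCont_def perspective_Pair)
qed

lemma perspective_ray: "perspective c (u, t * u) = u * c t"
  by (simp add: perspective_Pair)

text \<open>Consequently the perspective is additive on proportional pairs: such pairs lie on a
  common line through the origin, or both on the axis u = 0 where it vanishes.\<close>
lemma perspective_lincomb:
  assumes "x * y' = x' * y"
  shows "perspective c (\<alpha>*x + \<beta>*x', \<alpha>*y + \<beta>*y') = \<alpha> * perspective c (x, y) + \<beta> * perspective c (x', y')"
proof -
  consider "x = 0" "x' = 0" | t where "y = t * x" "y' = t * x'"
  proof (cases "x = 0")
    case True
    show ?thesis
    proof (cases "x' = 0")
      case False
      then have "y = (y'/x') * x" "y' = (y'/x') * x'" using assms True by (auto simp: field_simps)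
      then show ?thesis using that(2) by blast
    qed (use True that(1) in blast)
  next
    case False
    then have "y = (y/x) * x" "y' = (y/x) * x'" using assms by (auto simp: field_simps)
    then show ?thesis using that(2) by blast
  qed
  then show ?thesis
  proof cases
    case 1 then show ?thesis by (simp add: perspective_Pair)
  next
    case 2
    have "\<alpha>*y + \<beta>*y' = t * (\<alpha>*x + \<beta>*x')" using 2 by (simp add: algebra_simps)
    then show ?thesis using 2 by (simp only: perspective_ray) (simp add: algebra_simps)
  qed
qed

section \<open>From a sublinear profile to a quasi-state\<close>

definition quasi_state_of :: "real \<Rightarrow> (real \<Rightarrow> real) \<Rightarrow> real^3^3 \<Rightarrow> real" where
  "quasi_state_of a c X = perspective c (X$1$2, X$2$3) + a * X$2$3"

lemma quasi_state_of_Mh: "quasi_state_of a c (Mh x y z) = perspective c (x, y) + a * y"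
  by (simp add: quasi_state_of_def Mh_nth)

lemma continuous_quasi_state_of:
  assumes "continuous_on UNIV c" and "sublinear c"
  shows "continuous_on UNIV (quasi_state_of a c)"
proof -
  have "isCont (quasi_state_of a c) X" for X
  proof -
    have "isCont (\<lambda>X::real^3^3. (X$1$2, X$2$3)) X" by (intro continuous_intros)
    then have "isCont (\<lambda>X::real^3^3. perspective c (X$1$2, X$2$3)) X"
      using isCont_o2 isCont_perspective[OF assms] by blast
    then show ?thesis unfolding quasi_state_of_def by (intro continuous_intros)
  qed
  then show ?thesis by (simp add: continuous_on_eq_continuous_at)
qed

text \<open>Commuting elements have proportional (x, y)-coordinates, on which the perspective
  is additive.\<close>
lemma lie_quasi_state_quasi_state_of: "lie_quasi_state_h3 (quasi_state_of a c)"
  unfolding lie_quasi_state_h3_def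
proof (intro ballI impI allI)
  fix X Y :: "real^3^3" and \<alpha> \<beta> :: real
  assume "X \<in> h3" "Y \<in> h3" and commute: "X ** Y = Y ** X"
  obtain x y z x' y' z' where XY: "X = Mh x y z" "Y = Mh x' y' z'"
    using \<open>X \<in> h3\<close> \<open>Y \<in> h3\<close> by (metis h3E)
  have "x * y' = x' * y" using commute by (simp add: XY Mh_commute_iff)
  then show "quasi_state_of a c (\<alpha> *\<^sub>R X + \<beta> *\<^sub>R Y) = \<alpha> * quasi_state_of a c X + \<beta> * quasi_state_of a c Y"
    by (simp add: XY Mh_lincomb quasi_state_of_Mh perspective_lincomb algebra_simps)
qed

text \<open>It only depends on the coordinates x, y, which the adjoint action does not move.\<close>
lemma Ad_invariant_quasi_state_of: "Ad_invariant_h3 (quasi_state_of a c)"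
  unfolding Ad_invariant_h3_def
proof (intro ballI)
  fix g X assume "g \<in> H3" "X \<in> h3"
  then obtain p q r x y z where "g = mat 1 + Mh p q r" "X = Mh x y z"
    by (auto simp: H3_def h3_def)
  then show "quasi_state_of a c (Ad g X) = quasi_state_of a c X"
    by (simp add: Ad_Mh quasi_state_of_Mh)
qed

section \<open>The profile of a continuous Ad-invariant quasi-state\<close>

text \<open>Every element commutes with itself, so a quasi-state is homogeneous.\<close>
lemma quasi_state_homogeneous:
  assumes "lie_quasi_state_h3 \<zeta>"
  shows "\<zeta> (Mh (t*x) (t*y) (t*z)) = t * \<zeta> (Mh x y z)"
proof -
  have "Mh x y z ** Mh x y z = Mh x y z ** Mh x y z" ..
  then have "\<zeta> (t *\<^sub>R Mh x y z + 0 *\<^sub>R Mh x y z) = t * \<zeta> (Mh x y z) + 0 * \<zeta> (Mh x y z)"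
    using assms Mh_in_h3 unfolding lie_quasi_state_h3_def by blast
  then show ?thesis by (simp only: Mh_lincomb) simp
qed

text \<open>Off the centre, every shear of the central coordinate is realised by the adjoint
  action, so an Ad-invariant function ignores z there.\<close>
lemma Ad_invariant_ignores_centre:
  assumes "Ad_invariant_h3 \<zeta>" and "x \<noteq> 0 \<or> y \<noteq> 0"
  shows "\<zeta> (Mh x y z) = \<zeta> (Mh x y z')"
proof -
  have shear: "\<zeta> (Mh x y (z + p*y - x*q)) = \<zeta> (Mh x y z)" for p q
    using assms(1) unipotent_in_H3[of p q 0] Mh_in_h3[of x y z]
    unfolding Ad_invariant_h3_def by (metis Ad_Mh)
  show ?thesis
  proof (cases "y = 0")
    case False
    then show ?thesis using shear[of "(z' - z) / y" 0] by simp
  next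
    case True
    with assms(2) have "x \<noteq> 0" by simp
    then show ?thesis using shear[of 0 "(z - z') / x"] by simp
  qed
qed

text \<open>On the centre the quasi-state vanishes: M(0,0,1) commutes with M(1,0,0), and
  their sum has the same value as M(1,0,0).\<close>
lemma quasi_state_centre:
  assumes "lie_quasi_state_h3 \<zeta>" and "Ad_invariant_h3 \<zeta>"
  shows "\<zeta> (Mh 0 0 z) = 0"
proof -
  have "Mh 1 0 0 ** Mh 0 0 1 = Mh 0 0 1 ** Mh 1 0 0" by (simp add: Mh_commute_iff)
  then have "\<zeta> (1 *\<^sub>R Mh 1 0 0 + 1 *\<^sub>R Mh 0 0 1) = 1 * \<zeta> (Mh 1 0 0) + 1 * \<zeta> (Mh 0 0 1)"
    using assms(1) Mh_in_h3 unfolding lie_quasi_state_h3_def by blast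
  moreover have "\<zeta> (Mh 1 0 1) = \<zeta> (Mh 1 0 0)"
    using Ad_invariant_ignores_centre[OF assms(2)] by simp
  ultimately have "\<zeta> (Mh 0 0 1) = 0" by (simp only: Mh_lincomb) simp
  then show ?thesis using quasi_state_homogeneous[OF assms(1), of z 0 0 1] by simp
qed

lemma quasi_state_axis:
  assumes "lie_quasi_state_h3 \<zeta>" and "Ad_invariant_h3 \<zeta>"
  shows "\<zeta> (Mh 0 y z) = \<zeta> (Mh 0 1 0) * y"
proof (cases "y = 0")
  case True
  then show ?thesis using quasi_state_centre[OF assms] by simp
next
  case False
  then have "\<zeta> (Mh 0 y z) = \<zeta> (Mh 0 y 0)" using Ad_invariant_ignores_centre[OF assms(2)] by blast
  also have "\<dots> = \<zeta> (Mh 0 1 0) * y" using quasi_state_homogeneous[OF assms(1), of y 0 1 0] by simp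
  finally show ?thesis .
qed

lemma quasi_state_off_axis:
  assumes "lie_quasi_state_h3 \<zeta>" and "Ad_invariant_h3 \<zeta>" and "x \<noteq> 0"
  shows "\<zeta> (Mh x y z) = x * \<zeta> (Mh 1 (y/x) 0)"
proof -
  have "\<zeta> (Mh x y z) = \<zeta> (Mh x y 0)" using Ad_invariant_ignores_centre[OF assms(2)] assms(3) by blast
  also have "\<dots> = x * \<zeta> (Mh 1 (y/x) 0)" using quasi_state_homogeneous[OF assms(1), of x 1 "y/x" 0] assms(3) by simp
  finally show ?thesis .
qed

text \<open>The profile t \<mapsto> \<zeta>(M(1,t,0)) - a t is sublinear: by homogeneity its quotient by
  |t| equals \<plusminus>(\<zeta>(M(1/t,1,0)) - \<zeta>(M(0,1,0))), which tends to 0 by continuity.\<close>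
lemma sublinear_profile:
  assumes cont: "continuous_on h3 \<zeta>" and qs: "lie_quasi_state_h3 \<zeta>"
  shows "sublinear (\<lambda>t. \<zeta> (Mh 1 t 0) - \<zeta> (Mh 0 1 0) * t)"
proof -
  let ?a = "\<zeta> (Mh 0 1 0)" and ?c = "\<lambda>t. \<zeta> (Mh 1 t 0) - \<zeta> (Mh 0 1 0) * t"
  have "((\<lambda>s::real. Mh (inverse s) 1 0) \<longlongrightarrow> Mh 0 1 0) at_infinity"
    by (intro tendsto_Mh tendsto_inverse_0 tendsto_const)
  then have "((\<lambda>s. \<zeta> (Mh (inverse s) 1 0)) \<longlongrightarrow> ?a) at_infinity"
    by (rule continuous_on_tendsto_compose[OF cont _ Mh_in_h3]) (simp add: Mh_in_h3)
  then have lim: "((\<lambda>s. \<bar>\<zeta> (Mh (inverse s) 1 0) - ?a\<bar>) \<longlongrightarrow> 0) at_infinity"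
    by (intro tendsto_eq_intros) auto
  have "eventually (\<lambda>s. \<bar>\<zeta> (Mh (inverse s) 1 0) - ?a\<bar> = norm (?c s / \<bar>s\<bar>)) at_infinity"
    unfolding eventually_at_infinity
  proof (intro exI[of _ 1] allI impI)
    fix s :: real assume "1 \<le> norm s"
    then have "s \<noteq> 0" by auto
    have "\<zeta> (Mh 1 s 0) = s * \<zeta> (Mh (inverse s) 1 0)"
      using quasi_state_homogeneous[OF qs, of s "inverse s" 1 0] \<open>s \<noteq> 0\<close> by simp
    then have "?c s = s * (\<zeta> (Mh (inverse s) 1 0) - ?a)" by (simp add: right_diff_distrib)
    then show "\<bar>\<zeta> (Mh (inverse s) 1 0) - ?a\<bar> = norm (?c s / \<bar>s\<bar>)"
      using \<open>s \<noteq> 0\<close> by (simp add: abs_mult)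
  qed
  then have "((\<lambda>s. norm (?c s / \<bar>s\<bar>)) \<longlongrightarrow> 0) at_infinity"
    using lim tendsto_cong by fastforce
  then show ?thesis unfolding sublinear_def tendsto_norm_zero_iff .
qed

lemma continuous_profile:
  assumes "continuous_on h3 \<zeta>"
  shows "continuous_on UNIV (\<lambda>t. \<zeta> (Mh 1 t 0) - \<zeta> (Mh 0 1 0) * t)"
proof -
  have "continuous_on UNIV (\<lambda>t. Mh 1 t 0)"
    unfolding continuous_on_eq_continuous_at[OF open_UNIV] isCont_def
    by (intro ballI tendsto_Mh tendsto_const tendsto_ident_at)
  then have "continuous_on UNIV (\<lambda>t. \<zeta> (Mh 1 t 0))"
    by (rule continuous_on_compose2[OF assms]) (auto simp: Mh_in_h3)
  then show ?thesis by (intro continuous_intros)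
qed

theorem mainTheorem15:
  shows "(\<forall>(a::real) (c::real \<Rightarrow> real). continuous_on UNIV c \<and> sublinear c \<longrightarrow>
           (\<exists>\<zeta>. continuous_on h3 \<zeta> \<and> lie_quasi_state_h3 \<zeta> \<and> Ad_invariant_h3 \<zeta> \<and>
                 (\<forall>x y z. x \<noteq> 0 \<longrightarrow> \<zeta> (Mh x y z) = c (y / x) * x + a * y) \<and>
                 (\<forall>y z. \<zeta> (Mh 0 y z) = a * y)))
       \<and> (\<forall>\<zeta>. continuous_on h3 \<zeta> \<and> lie_quasi_state_h3 \<zeta> \<and> Ad_invariant_h3 \<zeta> \<longrightarrow>
           (\<exists>(a::real) (c::real \<Rightarrow> real). continuous_on UNIV c \<and> sublinear c \<and>
                 (\<forall>x y z. x \<noteq> 0 \<longrightarrow> \<zeta> (Mh x y z) = c (y / x) * x + a * y) \<and>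
                 (\<forall>y z. \<zeta> (Mh 0 y z) = a * y)))"
proof (intro conjI allI impI)
  fix a :: real and c :: "real \<Rightarrow> real"
  assume "continuous_on UNIV c \<and> sublinear c"
  then have "continuous_on h3 (quasi_state_of a c)"
    using continuous_quasi_state_of continuous_on_subset by blast
  then show "\<exists>\<zeta>. continuous_on h3 \<zeta> \<and> lie_quasi_state_h3 \<zeta> \<and> Ad_invariant_h3 \<zeta> \<and>
                 (\<forall>x y z. x \<noteq> 0 \<longrightarrow> \<zeta> (Mh x y z) = c (y / x) * x + a * y) \<and>
                 (\<forall>y z. \<zeta> (Mh 0 y z) = a * y)"
    using lie_quasi_state_quasi_state_of Ad_invariant_quasi_state_of
    by (intro exI[of _ "quasi_state_of a c"]) (simp add: quasi_state_of_Mh perspective_Pair)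
next
  fix \<zeta> :: "real^3^3 \<Rightarrow> real"
  assume \<zeta>: "continuous_on h3 \<zeta> \<and> lie_quasi_state_h3 \<zeta> \<and> Ad_invariant_h3 \<zeta>"
  let ?a = "\<zeta> (Mh 0 1 0)" and ?c = "\<lambda>t. \<zeta> (Mh 1 t 0) - \<zeta> (Mh 0 1 0) * t"
  have off_axis: "\<zeta> (Mh x y z) = ?c (y / x) * x + ?a * y" if "x \<noteq> 0" for x y z
  proof -
    have "\<zeta> (Mh x y z) = x * \<zeta> (Mh 1 (y / x) 0)" using quasi_state_off_axis \<zeta> that by blast
    then show ?thesis using that by (simp add: algebra_simps)
  qed
  have axis: "\<zeta> (Mh 0 y z) = ?a * y" for y z
    using quasi_state_axis \<zeta> by (metis mult.commute)
  have "continuous_on UNIV ?c" "sublinear ?c"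
    using \<zeta> continuous_profile sublinear_profile by blast+
  with off_axis axis show "\<exists>a c. continuous_on UNIV c \<and> sublinear c \<and>
                 (\<forall>x y z. x \<noteq> 0 \<longrightarrow> \<zeta> (Mh x y z) = c (y / x) * x + a * y) \<and>
                 (\<forall>y z. \<zeta> (Mh 0 y z) = a * y)"
    by blast
qed

end
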